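(* For every $M$ with $0\le M<\frac12$, every deterministic semi-online algorithm with migration factor $M$ for scheduling on two hierarchical machines with known optimal makespan (bin stretching) has competitive ratio at least $\frac32$.
   Context: Model (two hierarchical machines with migration, bin stretching). Jobs $1,2,\dots,n$ arrive one by one ($n$ unknown in advance). Job $j$ has a size $p_j>0$ and a grade of service (GoS) $g_j\in\{1,2\}$; a job of GoS $1$ may only be processed on machine $m_1$, a job of GoS $2$ may be processed on $m_1$ or on $m_2$. The load of a machine is the total size of its jobs, the makespan is the maximum load. When job $j$ arrives, the algorithm must assign it, and may migrate previously arrived jobs (respecting GoS) of total size at most $M\cdot p_j$ (migration factor $M$). Bin stretching: the optimal offline makespan of the complete input is known in advance to the algorithm (scaled to $1$). The competitive ratio is the supremum over inputs of (algorithm's makespan)/(optimal makespan). *)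

theory Defs
  imports Complex_Main "HOL-Library.Extended_Real"
begin

datatype machine = M1 | M2

text \<open>A job is a pair (size, grade of service); GoS 1 = only m1, GoS 2 = m1 or m2.\<close>
type_synonym job = "real \<times> nat"

text \<open>An assignment maps job indices (0-based, in arrival order) to machines.\<close>
type_synonym assignment = "nat \<Rightarrow> machine"

definition valid_input :: "job list \<Rightarrow> bool" where
  "valid_input js \<longleftrightarrow> js \<noteq> [] \<and> (\<forall>j\<in>set js. fst j > 0 \<and> snd j \<in> {1,2})"

definition respects_gos :: "job list \<Rightarrow> assignment \<Rightarrow> bool" where
  "respects_gos js f \<longleftrightarrow> (\<forall>i<length js. snd (js ! i) = 1 \<longrightarrow> f i = M1)"

definition load :: "job list \<Rightarrow> assignment \<Rightarrow> machine \<Rightarrow> real" where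
  "load js f m = (\<Sum>i\<in>{i. i < length js \<and> f i = m}. fst (js ! i))"

definition makespan :: "job list \<Rightarrow> assignment \<Rightarrow> real" where
  "makespan js f = max (load js f M1) (load js f M2)"

definition opt :: "job list \<Rightarrow> real" where
  "opt js = Inf {makespan js f | f. respects_gos js f}"

text \<open>A deterministic semi-online algorithm (bin stretching): given the known optimal
  makespan T of the complete input and the prefix of jobs arrived so far, it returns the
  current assignment of all arrived jobs (after assigning the newest job and performing
  migrations). Determinism: the schedule is a function of T and the prefix.\<close>
type_synonym algorithm = "real \<Rightarrow> job list \<Rightarrow> assignment"

definition migrated :: "algorithm \<Rightarrow> real \<Rightarrow> job list \<Rightarrow> nat \<Rightarrow> real" where
  "migrated A T js k = (\<Sum>i\<in>{i. i < k \<and> A T (take k js) i \<noteq> A T (take (Suc k) js) i}.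
      fst (js ! i))"

definition feasible_alg :: "real \<Rightarrow> algorithm \<Rightarrow> bool" where
  "feasible_alg M A \<longleftrightarrow>
    (\<forall>js. valid_input js \<longrightarrow>
       (\<forall>k\<le>length js. respects_gos (take k js) (A (opt js) (take k js))) \<and>
       (\<forall>k<length js. migrated A (opt js) js k \<le> M * fst (js ! k)))"

definition competitive_ratio :: "algorithm \<Rightarrow> ereal" where
  "competitive_ratio A =
     (SUP js\<in>{js. valid_input js}. ereal (makespan js (A (opt js) js) / opt js))"

end

theory Submission
  imports Defs
begin

text \<open>The adversary starts with a GoS-1 job and a GoS-2 job, both of size 1, and announces
  optimum 2. If the algorithm keeps the second job on m1, a third GoS-1 job of size 1 follows:
  migrating the second job costs 1 > M, so m1 ends with load 3. If it puts the second job on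
  m2, a third GoS-2 job of size 2 follows: migrating costs 1 > 2M, so one machine ends with
  load 3. Both continuations have optimum 2, so the algorithm cannot tell them apart when
  the second job arrives, and either way the ratio is 3/2.\<close>

lemma load_eq_sum_if:
  "load js f m = (\<Sum>i<length js. if f i = m then fst (js ! i) else 0)"
proof -
  have "{i. i < length js \<and> f i = m} = {i\<in>{..<length js}. f i = m}" by auto
  then show ?thesis
    unfolding load_def
    using sum.inter_filter[of "{..<length js}" "\<lambda>i. fst (js ! i)" "\<lambda>i. f i = m"] by simp
qed

lemma opt_eqI:
  assumes "respects_gos js f" "makespan js f = c"
    and "\<And>h. respects_gos js h \<Longrightarrow> c \<le> makespan js h"
  shows "opt js = c"
  unfolding opt_def by (rule cInf_eq_minimum) (use assms in auto)

lemma size_le_migrated: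
  assumes "\<forall>j\<in>set js. 0 < fst j" "i < k" "k < length js"
    and "A T (take k js) i \<noteq> A T (take (Suc k) js) i"
  shows "fst (js ! i) \<le> migrated A T js k"
  unfolding migrated_def
  by (rule member_le_sum) (use assms in \<open>auto intro!: less_imp_le nth_mem\<close>)

lemma feasible_alg_respects_gos:
  assumes "feasible_alg M A" "valid_input js"
  shows "respects_gos js (A (opt js) js)"
  using assms unfolding feasible_alg_def by (metis order_refl take_all)

lemma feasible_alg_no_migration:
  assumes "feasible_alg M A" "valid_input js" "i < k" "k < length js"
    and "M * fst (js ! k) < fst (js ! i)"
  shows "A (opt js) (take (Suc k) js) i = A (opt js) (take k js) i"
proof (rule ccontr)
  assume "A (opt js) (take (Suc k) js) i \<noteq> A (opt js) (take k js) i"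
  then have "fst (js ! i) \<le> migrated A (opt js) js k"
    using assms(2-4) by (intro size_le_migrated) (auto simp: valid_input_def)
  moreover have "migrated A (opt js) js k \<le> M * fst (js ! k)"
    using assms(1,2,4) unfolding feasible_alg_def by blast
  ultimately show False using assms(5) by linarith
qed

lemma competitive_ratio_geI:
  assumes "valid_input js" "0 < opt js" "c * opt js \<le> makespan js (A (opt js) js)"
  shows "ereal c \<le> competitive_ratio A"
proof -
  have "ereal c \<le> ereal (makespan js (A (opt js) js) / opt js)"
    using assms(2,3) by (simp add: pos_le_divide_eq)
  also have "\<dots> \<le> competitive_ratio A"
    unfolding competitive_ratio_def by (rule SUP_upper) (use assms(1) in auto)
  finally show ?thesis .
qed

definition adversary_prefix :: "job list" where
  "adversary_prefix = [(1, 1), (1, 2)]"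

definition adversary_small :: "job list" where
  "adversary_small = adversary_prefix @ [(1, 1)]"

definition adversary_large :: "job list" where
  "adversary_large = adversary_prefix @ [(2, 2)]"

lemmas adversary_defs = adversary_prefix_def adversary_small_def adversary_large_def

lemma valid_adversary_small: "valid_input adversary_small"
  and valid_adversary_large: "valid_input adversary_large"
  by (simp_all add: valid_input_def adversary_defs)

lemma opt_adversary_small: "opt adversary_small = 2"
proof (rule opt_eqI[where f = "\<lambda>i. if i = 1 then M2 else M1"])
  show "respects_gos adversary_small (\<lambda>i. if i = 1 then M2 else M1)"
    by (auto simp: respects_gos_def adversary_defs)
  show "makespan adversary_small (\<lambda>i. if i = 1 then M2 else M1) = 2"
    by (simp add: makespan_def load_eq_sum_if adversary_defs eval_nat_numeral)
  fix h assume "respects_gos adversary_small h"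
  then have "h 0 = M1" "h 2 = M1" by (auto simp: respects_gos_def adversary_defs)
  then show "2 \<le> makespan adversary_small h"
    unfolding makespan_def
    by (cases "h 1") (simp_all add: load_eq_sum_if adversary_defs eval_nat_numeral)
qed

lemma opt_adversary_large: "opt adversary_large = 2"
proof (rule opt_eqI[where f = "\<lambda>i. if i = 2 then M2 else M1"])
  show "respects_gos adversary_large (\<lambda>i. if i = 2 then M2 else M1)"
    by (auto simp: respects_gos_def adversary_defs)
  show "makespan adversary_large (\<lambda>i. if i = 2 then M2 else M1) = 2"
    by (simp add: makespan_def load_eq_sum_if adversary_defs eval_nat_numeral)
  fix h assume "respects_gos adversary_large h"
  then have "h 0 = M1" by (auto simp: respects_gos_def adversary_defs)
  then show "2 \<le> makespan adversary_large h"
    unfolding makespan_def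
    by (cases "h 1"; cases "h 2") (simp_all add: load_eq_sum_if adversary_defs eval_nat_numeral)
qed

lemma makespan_adversary_small:
  assumes "feasible_alg M A" "M < 1" "A 2 adversary_prefix 1 = M1"
  shows "3 \<le> makespan adversary_small (A 2 adversary_small)"
proof -
  have "A 2 adversary_small 1 = A 2 adversary_prefix 1"
    using feasible_alg_no_migration[OF assms(1) valid_adversary_small, of 1 2,
        unfolded opt_adversary_small] assms(2)
    by (simp add: adversary_defs)
  moreover have "A 2 adversary_small 0 = M1" "A 2 adversary_small 2 = M1"
    using feasible_alg_respects_gos[OF assms(1) valid_adversary_small]
    unfolding opt_adversary_small by (auto simp: respects_gos_def adversary_defs)
  ultimately show ?thesis
    using assms(3) unfolding makespan_def
    by (simp add: load_eq_sum_if adversary_defs eval_nat_numeral)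
qed

lemma makespan_adversary_large:
  assumes "feasible_alg M A" "M < 1/2" "A 2 adversary_prefix 1 = M2"
  shows "3 \<le> makespan adversary_large (A 2 adversary_large)"
proof -
  have "A 2 adversary_large 1 = A 2 adversary_prefix 1"
    using feasible_alg_no_migration[OF assms(1) valid_adversary_large, of 1 2,
        unfolded opt_adversary_large] assms(2)
    by (simp add: adversary_defs)
  moreover have "A 2 adversary_large 0 = M1"
    using feasible_alg_respects_gos[OF assms(1) valid_adversary_large]
    unfolding opt_adversary_large by (auto simp: respects_gos_def adversary_defs)
  ultimately show ?thesis
    using assms(3) unfolding makespan_def
    by (cases "A 2 adversary_large 2") (simp_all add: load_eq_sum_if adversary_defs eval_nat_numeral)
qed

theorem mainTheorem16:
  fixes M :: real and A :: algorithm
  assumes "0 \<le> M" and "M < 1/2"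
    and "feasible_alg M A"
  shows "competitive_ratio A \<ge> ereal (3/2)"
proof (cases "A 2 adversary_prefix 1")
  case M1
  then have "3 \<le> makespan adversary_small (A 2 adversary_small)"
    using makespan_adversary_small assms(2,3) by simp
  then show ?thesis
    by (intro competitive_ratio_geI[OF valid_adversary_small]) (simp_all add: opt_adversary_small)
next
  case M2
  then have "3 \<le> makespan adversary_large (A 2 adversary_large)"
    using makespan_adversary_large assms(2,3) by simp
  then show ?thesis
    by (intro competitive_ratio_geI[OF valid_adversary_large]) (simp_all add: opt_adversary_large)
qed

end
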